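(* Let $f:\mathbb F_2^6\to\mathbb F_2$ be $f(x_1,\dots,x_6)=(x_2\oplus x_2x_5\oplus x_4x_5)x_6\oplus x_3x_5(1\oplus x_6)\oplus x_1(1\oplus x_5)(1\oplus x_6)$. Let $r\ge6$ be even, $n=r+2$. (i) Let $h_1,h_2,h_3,h_4:\mathbb F_2^r\to\mathbb F_2$ be plateaued functions with pairwise disjoint Walsh supports, where $h_1,h_2,h_3$ are $2$-plateaued and $h_4$ is $4$-plateaued, and let $\mathfrak f(x,y)=f(h_1(x),h_2(x),h_3(x),h_4(x),y_1,y_2)$ for $(x,y)\in\mathbb F_2^r\times\mathbb F_2^2$. Then $W_{\mathfrak f}(u,v)\in\{0,\pm2^{n/2},\pm2^{(n+2)/2}\}$ for all $(u,v)$. (ii) For $i=1,\dots,4$ let $h_{1,i},h_{2,i},h_{3,i},h_{4,i}:\mathbb F_2^r\to\mathbb F_2$ satisfy the hypotheses of (i) (for each fixed $i$), and let $\mathfrak f_i(x,y)=f(h_{1,i}(x),\dots,h_{4,i}(x),y_1,y_2)$. Assume further that $h_{4,1},\dots,h_{4,4}$ have pairwise disjoint Walsh supports, and that for each $p\in\{1,2,3\}$: $S_{h_{p,1}}=S_{h_{p,2}}=S_{h_{p,3}}=S_{h_{p,4}}$ and $h^*_{p,1}\oplus h^*_{p,2}\oplus h^*_{p,3}\oplus h^*_{p,4}=1$ on this common support. Then: (a) the sets $S^{[1]}_{\mathfrak f_i}=\{w\in\mathbb F_2^n:|W_{\mathfrak f_i}(w)|=2^{(n+2)/2}\}$, $i=1,\dots,4$,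 are pairwise disjoint; (b) the sets $S^{[2]}_{\mathfrak f_i}=\{w:|W_{\mathfrak f_i}(w)|=2^{n/2}\}$ are all equal to a common set $S$, and the functions $\mathfrak f^*_{[2],i}:S\to\mathbb F_2$ defined by $W_{\mathfrak f_i}(w)=2^{n/2}(-1)^{\mathfrak f^*_{[2],i}(w)}$ satisfy $\mathfrak f^*_{[2],1}\oplus\dots\oplus\mathfrak f^*_{[2],4}=1$ on $S$. *)

theory Defs
  imports Main
begin

text \<open>Vectors of F_2^m are represented as boolean lists of length m
  (True = 1, False = 0); XOR on F_2 is inequality on bool.\<close>

definition vecs :: "nat \<Rightarrow> bool list set" where
  "vecs m = {xs. length xs = m}"

definition bxor :: "bool \<Rightarrow> bool \<Rightarrow> bool" (infixl "\<oplus>" 65) where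
  "a \<oplus> b \<longleftrightarrow> a \<noteq> b"

definition dotp :: "bool list \<Rightarrow> bool list \<Rightarrow> bool" where
  "dotp u x \<longleftrightarrow> odd (card {i. i < length u \<and> u ! i \<and> x ! i})"

definition walsh :: "nat \<Rightarrow> (bool list \<Rightarrow> bool) \<Rightarrow> bool list \<Rightarrow> int" where
  "walsh m h u = (\<Sum>x\<in>vecs m. (-1) ^ of_bool (h x \<oplus> dotp u x))"

definition wsupp :: "nat \<Rightarrow> (bool list \<Rightarrow> bool) \<Rightarrow> bool list set" where
  "wsupp m h = {u \<in> vecs m. walsh m h u \<noteq> 0}"

definition plateaued :: "nat \<Rightarrow> nat \<Rightarrow> (bool list \<Rightarrow> bool) \<Rightarrow> bool" where
  "plateaued m s h \<longleftrightarrow> (\<forall>u\<in>vecs m. walsh m h u \<in> {0, 2 ^ ((m + s) div 2), - (2 ^ ((m + s) div 2))})"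

text \<open>Dual h^* on the support, given by W_h(u) = A (-1)^(h^*(u)) with A > 0,
  i.e. h^*(u) = 1 iff W_h(u) < 0.\<close>
definition wdual :: "nat \<Rightarrow> (bool list \<Rightarrow> bool) \<Rightarrow> bool list \<Rightarrow> bool" where
  "wdual m h u \<longleftrightarrow> walsh m h u < 0"

definition f6 :: "bool \<Rightarrow> bool \<Rightarrow> bool \<Rightarrow> bool \<Rightarrow> bool \<Rightarrow> bool \<Rightarrow> bool" where
  "f6 x1 x2 x3 x4 x5 x6 =
     (((x2 \<oplus> (x2 \<and> x5) \<oplus> (x4 \<and> x5)) \<and> x6) \<oplus> (x3 \<and> x5 \<and> (True \<oplus> x6))
       \<oplus> (x1 \<and> (True \<oplus> x5) \<and> (True \<oplus> x6)))"

text \<open>The composite frak f(x,y) = f(h1 x, h2 x, h3 x, h4 x, y1, y2) on F_2^(r+2),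
  with w = x @ [y1, y2].\<close>
definition compose_f :: "nat \<Rightarrow> (bool list \<Rightarrow> bool) \<Rightarrow> (bool list \<Rightarrow> bool) \<Rightarrow>
    (bool list \<Rightarrow> bool) \<Rightarrow> (bool list \<Rightarrow> bool) \<Rightarrow> bool list \<Rightarrow> bool" where
  "compose_f r h1 h2 h3 h4 w =
     (let x = take r w in f6 (h1 x) (h2 x) (h3 x) (h4 x) (w ! r) (w ! (r + 1)))"

definition hyp_i :: "nat \<Rightarrow> (bool list \<Rightarrow> bool) \<Rightarrow> (bool list \<Rightarrow> bool) \<Rightarrow>
    (bool list \<Rightarrow> bool) \<Rightarrow> (bool list \<Rightarrow> bool) \<Rightarrow> bool" where
  "hyp_i r h1 h2 h3 h4 \<longleftrightarrow>
     plateaued r 2 h1 \<and> plateaued r 2 h2 \<and> plateaued r 2 h3 \<and> plateaued r 4 h4 \<and>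
     (\<forall>a\<in>{1..4::nat}. \<forall>b\<in>{1..4::nat}. a \<noteq> b \<longrightarrow>
        wsupp r ([h1, h2, h3, h4] ! (a - 1)) \<inter> wsupp r ([h1, h2, h3, h4] ! (b - 1)) = {})"

end

theory Submission
  imports Defs
begin

text \<open>Splitting the Walsh sum of the composite over the last two coordinates gives
  W(u,c,d) = W1(u) + (-1)^d W2(u) + (-1)^c W3(u) + (-1)^(c+d) W4(u), where Wk is the Walsh
  transform of hk. The Walsh supports of the hk are disjoint, so at most one term is nonzero
  and W(u,c,d) is a signed copy of a single Wk(u): its absolute value is 2^(n/2) exactly on the
  supports of h1, h2, h3 and 2^((n+2)/2) exactly on that of h4. On the support of hp (p \<le> 3)
  the dual of the composite is the dual of hp shifted by the bit 0, d or c, which does not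
  depend on the family; in a sum of four such duals the shifts cancel.\<close>

lemma finite_vecs: "finite (vecs m)"
  using finite_lists_length_eq[of "UNIV :: bool set" m] by (simp add: vecs_def)

lemma vecs_Suc: "vecs (Suc m) = (\<lambda>x. x @ [False]) ` vecs m \<union> (\<lambda>x. x @ [True]) ` vecs m"
proof (rule set_eqI)
  fix y
  show "y \<in> vecs (Suc m) \<longleftrightarrow> y \<in> (\<lambda>x. x @ [False]) ` vecs m \<union> (\<lambda>x. x @ [True]) ` vecs m"
  proof
    assume "y \<in> vecs (Suc m)"
    then have "length y = Suc m"
      by (simp add: vecs_def)
    then obtain x a where "y = x @ [a]" "length x = m"
      by (metis length_Suc_conv_rev)
    then show "y \<in> (\<lambda>x. x @ [False]) ` vecs m \<union> (\<lambda>x. x @ [True]) ` vecs m"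
      by (cases a) (auto simp: vecs_def)
  qed (auto simp: vecs_def)
qed

lemma sum_vecs_Suc:
  "(\<Sum>y\<in>vecs (Suc m). g y) = (\<Sum>x\<in>vecs m. g (x @ [False]) + g (x @ [True]))"
proof -
  have "inj_on (\<lambda>x. x @ [a]) (vecs m)" for a :: bool
    by (auto simp: inj_on_def)
  moreover have "(\<lambda>x. x @ [False]) ` vecs m \<inter> (\<lambda>x. x @ [True]) ` vecs m = {}"
    by auto
  ultimately show ?thesis
    unfolding vecs_Suc by (simp add: sum.union_disjoint finite_vecs sum.reindex sum.distrib)
qed

lemma vecs_add2_cases:
  assumes "w \<in> vecs (r + 2)"
  obtains u c d where "length u = r" "w = u @ [c, d]"
proof -
  have "length w = Suc (Suc r)"
    using assms by (simp add: vecs_def)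
  then obtain v d where "w = v @ [d]" "length v = Suc r"
    by (metis length_Suc_conv_rev)
  moreover from \<open>length v = Suc r\<close> obtain u c where "v = u @ [c]" "length u = r"
    by (metis length_Suc_conv_rev)
  ultimately show thesis
    using that by simp
qed

lemma dotp_snoc:
  assumes "length u = length x"
  shows "dotp (u @ [c]) (x @ [a]) = (dotp u x \<oplus> (c \<and> a))"
proof -
  have "{i. i < length (u @ [c]) \<and> (u @ [c]) ! i \<and> (x @ [a]) ! i}
      = {i. i < length u \<and> u ! i \<and> x ! i} \<union> (if c \<and> a then {length u} else {})"
    using assms by (auto simp: nth_append less_Suc_eq)
  then show ?thesis
    unfolding dotp_def by (cases "c \<and> a") (auto simp: bxor_def)
qed

lemma dotp_append2:
  assumes "length u = length x"
  shows "dotp (u @ [c, d]) (x @ [a, b]) = (dotp u x \<oplus> (c \<and> a) \<oplus> (d \<and> b))"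
  using dotp_snoc[of "u @ [c]" "x @ [a]" d b] dotp_snoc[of u x c a] assms by simp

lemma mem_wsupp: "u \<in> wsupp m h \<longleftrightarrow> length u = m \<and> walsh m h u \<noteq> 0"
  by (simp add: wsupp_def vecs_def)

lemma walsh_compose_f:
  fixes c d :: bool
  assumes "length u = r"
  shows "walsh (r + 2) (compose_f r h1 h2 h3 h4) (u @ [c, d]) =
    walsh r h1 u + (-1) ^ of_bool d * walsh r h2 u + (-1) ^ of_bool c * walsh r h3 u
      + (-1) ^ of_bool (c \<oplus> d) * walsh r h4 u"
proof -
  define t where "t h x = (-1::int) ^ of_bool (h x \<oplus> dotp u x)" for h x
  define g where "g y = (-1::int) ^ of_bool (compose_f r h1 h2 h3 h4 y \<oplus> dotp (u @ [c, d]) y)" for y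
  have fiber: "g (x @ [False, False]) + g (x @ [False, True])
      + (g (x @ [True, False]) + g (x @ [True, True]))
    = t h1 x + (-1) ^ of_bool d * t h2 x + (-1) ^ of_bool c * t h3 x
      + (-1) ^ of_bool (c \<oplus> d) * t h4 x"
    if "x \<in> vecs r" for x
  proof -
    have "length x = r"
      using that by (simp add: vecs_def)
    then have "compose_f r h1 h2 h3 h4 (x @ [a, b]) = f6 (h1 x) (h2 x) (h3 x) (h4 x) a b"
        and "dotp (u @ [c, d]) (x @ [a, b]) = (dotp u x \<oplus> (c \<and> a) \<oplus> (d \<and> b))" for a b
      using assms by (simp_all add: compose_f_def nth_append dotp_append2)
    then show ?thesis
      by (simp add: g_def t_def f6_def bxor_def)
  qed
  have "walsh (r + 2) (compose_f r h1 h2 h3 h4) (u @ [c, d])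
      = (\<Sum>x\<in>vecs r. t h1 x + (-1) ^ of_bool d * t h2 x + (-1) ^ of_bool c * t h3 x
          + (-1) ^ of_bool (c \<oplus> d) * t h4 x)"
    unfolding walsh_def g_def[symmetric]
    by (simp add: sum_vecs_Suc[where m = "Suc r"] sum_vecs_Suc[where m = r] fiber cong: sum.cong)
  then show ?thesis
    by (simp add: walsh_def t_def sum.distrib sum_distrib_left)
qed

lemma hyp_iD:
  assumes "hyp_i r h1 h2 h3 h4"
  shows "plateaued r 2 h1" "plateaued r 2 h2" "plateaued r 2 h3" "plateaued r 4 h4"
    and "wsupp r h1 \<inter> wsupp r h2 = {}" "wsupp r h1 \<inter> wsupp r h3 = {}"
    and "wsupp r h1 \<inter> wsupp r h4 = {}" "wsupp r h2 \<inter> wsupp r h3 = {}"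
    and "wsupp r h2 \<inter> wsupp r h4 = {}" "wsupp r h3 \<inter> wsupp r h4 = {}"
proof -
  have disjoint: "wsupp r ([h1, h2, h3, h4] ! (a - 1)) \<inter> wsupp r ([h1, h2, h3, h4] ! (b - 1)) = {}"
    if "a \<in> {1..4}" "b \<in> {1..4}" "a \<noteq> b" for a b
    using assms that unfolding hyp_i_def by blast
  show "plateaued r 2 h1" "plateaued r 2 h2" "plateaued r 2 h3" "plateaued r 4 h4"
    using assms by (simp_all add: hyp_i_def)
  show "wsupp r h1 \<inter> wsupp r h2 = {}" "wsupp r h1 \<inter> wsupp r h3 = {}"
    and "wsupp r h1 \<inter> wsupp r h4 = {}" "wsupp r h2 \<inter> wsupp r h3 = {}"
    and "wsupp r h2 \<inter> wsupp r h4 = {}" "wsupp r h3 \<inter> wsupp r h4 = {}"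
    using disjoint[of 1 2] disjoint[of 1 3] disjoint[of 1 4] disjoint[of 2 3]
      disjoint[of 2 4] disjoint[of 3 4]
    by simp_all
qed

lemma walsh_compose_f_cases:
  fixes r :: nat and h1 h2 h3 h4 :: "bool list \<Rightarrow> bool" and u :: "bool list" and c d :: bool
  assumes "hyp_i r h1 h2 h3 h4" and "length u = r"
  defines "W \<equiv> walsh (r + 2) (compose_f r h1 h2 h3 h4) (u @ [c, d])"
  obtains
    (first) "walsh r h1 u \<noteq> 0" "walsh r h2 u = 0" "walsh r h3 u = 0" "walsh r h4 u = 0"
      "W = walsh r h1 u"
  | (second) "walsh r h1 u = 0" "walsh r h2 u \<noteq> 0" "walsh r h3 u = 0" "walsh r h4 u = 0"
      "W = (-1) ^ of_bool d * walsh r h2 u"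
  | (third) "walsh r h1 u = 0" "walsh r h2 u = 0" "walsh r h3 u \<noteq> 0" "walsh r h4 u = 0"
      "W = (-1) ^ of_bool c * walsh r h3 u"
  | (fourth) "walsh r h1 u = 0" "walsh r h2 u = 0" "walsh r h3 u = 0" "walsh r h4 u \<noteq> 0"
      "W = (-1) ^ of_bool (c \<oplus> d) * walsh r h4 u"
  | (none) "walsh r h1 u = 0" "walsh r h2 u = 0" "walsh r h3 u = 0" "walsh r h4 u = 0"
      "W = 0"
proof -
  have "walsh r h u = 0 \<or> walsh r g u = 0" if "wsupp r h \<inter> wsupp r g = {}" for h g
    using that assms(2) by (auto simp: mem_wsupp)
  then have exclusive: "walsh r h1 u = 0 \<or> walsh r h2 u = 0" "walsh r h1 u = 0 \<or> walsh r h3 u = 0"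
    "walsh r h1 u = 0 \<or> walsh r h4 u = 0" "walsh r h2 u = 0 \<or> walsh r h3 u = 0"
    "walsh r h2 u = 0 \<or> walsh r h4 u = 0" "walsh r h3 u = 0 \<or> walsh r h4 u = 0"
    using hyp_iD(5-10)[OF assms(1)] by blast+
  have W: "W = walsh r h1 u + (-1) ^ of_bool d * walsh r h2 u
      + (-1) ^ of_bool c * walsh r h3 u + (-1) ^ of_bool (c \<oplus> d) * walsh r h4 u"
    unfolding W_def using assms(2) by (rule walsh_compose_f)
  consider "walsh r h1 u \<noteq> 0" | "walsh r h2 u \<noteq> 0" | "walsh r h3 u \<noteq> 0" | "walsh r h4 u \<noteq> 0"
    | "walsh r h1 u = 0" "walsh r h2 u = 0" "walsh r h3 u = 0" "walsh r h4 u = 0"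
    by blast
  then show thesis
    by cases (use exclusive W that in simp_all)
qed

lemma abs_walsh_plateaued:
  assumes "plateaued m s h" and "length u = m" and "walsh m h u \<noteq> 0"
  shows "\<bar>walsh m h u\<bar> = 2 ^ ((m + s) div 2)"
  using assms by (auto simp: plateaued_def vecs_def)

lemma walsh_compose_f_values:
  assumes "hyp_i r h1 h2 h3 h4" and "w \<in> vecs (r + 2)"
  shows "walsh (r + 2) (compose_f r h1 h2 h3 h4) w \<in>
    {0, 2 ^ ((r + 2) div 2), - (2 ^ ((r + 2) div 2)), 2 ^ ((r + 4) div 2), - (2 ^ ((r + 4) div 2))}"
proof -
  obtain u c d where u: "length u = r" "w = u @ [c, d]"
    using assms(2) by (rule vecs_add2_cases)
  then have "u \<in> vecs r"
    by (simp add: vecs_def)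
  then have "walsh r h1 u \<in> {0, 2 ^ ((r + 2) div 2), - (2 ^ ((r + 2) div 2))}"
      "walsh r h2 u \<in> {0, 2 ^ ((r + 2) div 2), - (2 ^ ((r + 2) div 2))}"
      "walsh r h3 u \<in> {0, 2 ^ ((r + 2) div 2), - (2 ^ ((r + 2) div 2))}"
      "walsh r h4 u \<in> {0, 2 ^ ((r + 4) div 2), - (2 ^ ((r + 4) div 2))}"
    using hyp_iD(1-4)[OF assms(1)] by (simp_all add: plateaued_def)
  then show ?thesis
    unfolding u(2)
    by (cases rule: walsh_compose_f_cases[OF assms(1) u(1), of c d]; cases c; cases d) auto
qed

lemma abs_walsh_compose_f:
  fixes r :: nat and h1 h2 h3 h4 :: "bool list \<Rightarrow> bool" and u :: "bool list" and c d :: bool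
  assumes "hyp_i r h1 h2 h3 h4" and "length u = r"
  defines "W \<equiv> walsh (r + 2) (compose_f r h1 h2 h3 h4) (u @ [c, d])"
  shows "\<bar>W\<bar> = 2 ^ ((r + 4) div 2) \<longleftrightarrow> walsh r h4 u \<noteq> 0"
    and "\<bar>W\<bar> = 2 ^ ((r + 2) div 2) \<longleftrightarrow>
      walsh r h1 u \<noteq> 0 \<or> walsh r h2 u \<noteq> 0 \<or> walsh r h3 u \<noteq> 0"
proof -
  have "(r + 4) div 2 = Suc ((r + 2) div 2)"
    by simp
  then have levels_differ: "(2::int) ^ ((r + 2) div 2) \<noteq> 2 ^ ((r + 4) div 2)"
    by simp
  note abs_walsh = abs_walsh_plateaued[OF hyp_iD(1) assms(2)]
    abs_walsh_plateaued[OF hyp_iD(2) assms(2)] abs_walsh_plateaued[OF hyp_iD(3) assms(2)]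
    abs_walsh_plateaued[OF hyp_iD(4) assms(2)]
  show "\<bar>W\<bar> = 2 ^ ((r + 4) div 2) \<longleftrightarrow> walsh r h4 u \<noteq> 0"
    and "\<bar>W\<bar> = 2 ^ ((r + 2) div 2) \<longleftrightarrow>
      walsh r h1 u \<noteq> 0 \<or> walsh r h2 u \<noteq> 0 \<or> walsh r h3 u \<noteq> 0"
    unfolding W_def
    by (cases rule: walsh_compose_f_cases[OF assms(1,2), of c d];
        use assms(1) abs_walsh levels_differ in \<open>simp add: abs_mult\<close>)+
qed

lemma wdual_compose_f:
  fixes r :: nat and h1 h2 h3 h4 :: "bool list \<Rightarrow> bool" and u :: "bool list" and c d :: bool
  assumes "hyp_i r h1 h2 h3 h4" and "length u = r"
  defines "F \<equiv> compose_f r h1 h2 h3 h4"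
  shows "walsh r h1 u \<noteq> 0 \<Longrightarrow> wdual (r + 2) F (u @ [c, d]) = wdual r h1 u"
    and "walsh r h2 u \<noteq> 0 \<Longrightarrow> wdual (r + 2) F (u @ [c, d]) = (d \<oplus> wdual r h2 u)"
    and "walsh r h3 u \<noteq> 0 \<Longrightarrow> wdual (r + 2) F (u @ [c, d]) = (c \<oplus> wdual r h3 u)"
proof -
  have sign: "(-1) ^ of_bool b * x < 0 \<longleftrightarrow> (b \<oplus> (x < 0))" if "x \<noteq> 0" for b and x :: int
    using that by (cases b) (auto simp: bxor_def)
  show "walsh r h1 u \<noteq> 0 \<Longrightarrow> wdual (r + 2) F (u @ [c, d]) = wdual r h1 u"
    and "walsh r h2 u \<noteq> 0 \<Longrightarrow> wdual (r + 2) F (u @ [c, d]) = (d \<oplus> wdual r h2 u)"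
    and "walsh r h3 u \<noteq> 0 \<Longrightarrow> wdual (r + 2) F (u @ [c, d]) = (c \<oplus> wdual r h3 u)"
    unfolding F_def wdual_def
    by (cases rule: walsh_compose_f_cases[OF assms(1,2), of c d]; simp add: sign)+
qed

definition walsh_level :: "nat \<Rightarrow> (bool list \<Rightarrow> bool) \<Rightarrow> int \<Rightarrow> bool list set" where
  "walsh_level m h a = {w \<in> vecs m. \<bar>walsh m h w\<bar> = a}"

lemma walsh_level_compose_f_top_disjoint:
  assumes "hyp_i r h1 h2 h3 h4" and "hyp_i r g1 g2 g3 g4"
    and "wsupp r h4 \<inter> wsupp r g4 = {}"
  shows "walsh_level (r + 2) (compose_f r h1 h2 h3 h4) (2 ^ ((r + 4) div 2))
    \<inter> walsh_level (r + 2) (compose_f r g1 g2 g3 g4) (2 ^ ((r + 4) div 2)) = {}"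
proof -
  have False if w: "w \<in> walsh_level (r + 2) (compose_f r h1 h2 h3 h4) (2 ^ ((r + 4) div 2))
    \<inter> walsh_level (r + 2) (compose_f r g1 g2 g3 g4) (2 ^ ((r + 4) div 2))" for w
  proof -
    have "w \<in> vecs (r + 2)"
      using w by (simp add: walsh_level_def)
    then obtain u c d where u: "length u = r" "w = u @ [c, d]"
      by (rule vecs_add2_cases)
    then have "u \<in> wsupp r h4 \<inter> wsupp r g4"
      using w abs_walsh_compose_f(1)[OF assms(1) u(1)] abs_walsh_compose_f(1)[OF assms(2) u(1)]
      by (simp add: walsh_level_def mem_wsupp)
    then show False
      using assms(3) by blast
  qed
  then show ?thesis
    by blast
qed

lemma walsh_level_compose_f_mid_eq:
  assumes "hyp_i r h1 h2 h3 h4" and "hyp_i r g1 g2 g3 g4"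
    and "wsupp r h1 = wsupp r g1" "wsupp r h2 = wsupp r g2" "wsupp r h3 = wsupp r g3"
  shows "walsh_level (r + 2) (compose_f r h1 h2 h3 h4) (2 ^ ((r + 2) div 2))
    = walsh_level (r + 2) (compose_f r g1 g2 g3 g4) (2 ^ ((r + 2) div 2))"
proof (rule set_eqI)
  fix w
  show "w \<in> walsh_level (r + 2) (compose_f r h1 h2 h3 h4) (2 ^ ((r + 2) div 2))
    \<longleftrightarrow> w \<in> walsh_level (r + 2) (compose_f r g1 g2 g3 g4) (2 ^ ((r + 2) div 2))"
  proof (cases "w \<in> vecs (r + 2)")
    case True
    then obtain u c d where u: "length u = r" "w = u @ [c, d]"
      by (rule vecs_add2_cases)
    then have "walsh r h1 u \<noteq> 0 \<longleftrightarrow> walsh r g1 u \<noteq> 0" "walsh r h2 u \<noteq> 0 \<longleftrightarrow> walsh r g2 u \<noteq> 0"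
      "walsh r h3 u \<noteq> 0 \<longleftrightarrow> walsh r g3 u \<noteq> 0"
      using assms(3-5) by (metis mem_wsupp)+
    then show ?thesis
      using True abs_walsh_compose_f(2)[OF assms(1) u(1)] abs_walsh_compose_f(2)[OF assms(2) u(1)]
      by (simp add: walsh_level_def u(2))
  qed (simp add: walsh_level_def)
qed

lemma wdual_compose_f_xor:
  fixes r :: nat and H :: "nat \<Rightarrow> nat \<Rightarrow> bool list \<Rightarrow> bool"
  defines "F \<equiv> \<lambda>i. compose_f r (H 1 i) (H 2 i) (H 3 i) (H 4 i)"
  assumes hyp: "\<forall>i\<in>{1..4}. hyp_i r (H 1 i) (H 2 i) (H 3 i) (H 4 i)"
    and supp: "\<forall>p\<in>{1..3}. \<forall>i\<in>{1..4}. wsupp r (H p i) = wsupp r (H p 1)"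
    and dual_sum: "\<forall>p\<in>{1..3}. \<forall>u\<in>wsupp r (H p 1).
      wdual r (H p 1) u \<oplus> wdual r (H p 2) u \<oplus> wdual r (H p 3) u \<oplus> wdual r (H p 4) u"
    and w: "w \<in> walsh_level (r + 2) (F 1) (2 ^ ((r + 2) div 2))"
  shows "wdual (r + 2) (F 1) w \<oplus> wdual (r + 2) (F 2) w \<oplus> wdual (r + 2) (F 3) w \<oplus> wdual (r + 2) (F 4) w"
proof -
  have "w \<in> vecs (r + 2)"
    using w by (simp add: walsh_level_def)
  then obtain u c d where u: "length u = r" "w = u @ [c, d]"
    by (rule vecs_add2_cases)
  have "walsh r (H 1 1) u \<noteq> 0 \<or> walsh r (H 2 1) u \<noteq> 0 \<or> walsh r (H 3 1) u \<noteq> 0"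
    using w abs_walsh_compose_f(2)[OF bspec[OF hyp, of 1] u(1)] by (simp add: walsh_level_def F_def u(2))
  moreover have "(1::nat) \<in> {1..3}" "(2::nat) \<in> {1..3}" "(3::nat) \<in> {1..3}"
    by simp_all
  ultimately obtain p where p: "p \<in> {1..3}" "u \<in> wsupp r (H p 1)"
    using u(1) by (metis mem_wsupp)
  have nonzero: "walsh r (H p i) u \<noteq> 0" if "i \<in> {1..4}" for i
    using supp p that by (metis mem_wsupp)
  have "\<exists>b. \<forall>i\<in>{1..4}. wdual (r + 2) (F i) w = (b \<oplus> wdual r (H p i) u)"
  proof -
    consider "p = 1" | "p = 2" | "p = 3"
      using p(1) by fastforce
    then show ?thesis
    proof cases
      case 1
      have "wdual (r + 2) (F i) w = wdual r (H 1 i) u" if "i \<in> {1..4}" for i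
        using wdual_compose_f(1)[OF bspec[OF hyp that] u(1)] nonzero[OF that] 1
        by (simp add: F_def u(2))
      then show ?thesis
        using 1 by (intro exI[of _ False]) (simp add: bxor_def)
    next
      case 2
      have "wdual (r + 2) (F i) w = (d \<oplus> wdual r (H 2 i) u)" if "i \<in> {1..4}" for i
        using wdual_compose_f(2)[OF bspec[OF hyp that] u(1)] nonzero[OF that] 2
        by (simp add: F_def u(2))
      then show ?thesis
        using 2 by blast
    next
      case 3
      have "wdual (r + 2) (F i) w = (c \<oplus> wdual r (H 3 i) u)" if "i \<in> {1..4}" for i
        using wdual_compose_f(3)[OF bspec[OF hyp that] u(1)] nonzero[OF that] 3
        by (simp add: F_def u(2))
      then show ?thesis
        using 3 by blast
    qed
  qed
  then obtain b where "\<forall>i\<in>{1..4}. wdual (r + 2) (F i) w = (b \<oplus> wdual r (H p i) u)"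
    by blast
  then show ?thesis
    using bspec[OF bspec[OF dual_sum p(1)] p(2)] by (cases b) (simp_all add: bxor_def)
qed

lemma walsh_levels_compose_f_family:
  fixes r :: nat and H :: "nat \<Rightarrow> nat \<Rightarrow> bool list \<Rightarrow> bool"
  defines "F \<equiv> \<lambda>i. compose_f r (H 1 i) (H 2 i) (H 3 i) (H 4 i)"
  assumes hyp: "\<forall>i\<in>{1..4}. hyp_i r (H 1 i) (H 2 i) (H 3 i) (H 4 i)"
    and supp4_disjoint: "\<forall>i\<in>{1..4}. \<forall>j\<in>{1..4}. i \<noteq> j \<longrightarrow> wsupp r (H 4 i) \<inter> wsupp r (H 4 j) = {}"
    and supp_dual: "\<forall>p\<in>{1..3}. (\<forall>i\<in>{1..4}. wsupp r (H p i) = wsupp r (H p 1))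
      \<and> (\<forall>u\<in>wsupp r (H p 1).
           wdual r (H p 1) u \<oplus> wdual r (H p 2) u \<oplus> wdual r (H p 3) u \<oplus> wdual r (H p 4) u)"
  shows "\<lbrakk>i \<in> {1..4}; j \<in> {1..4}; i \<noteq> j\<rbrakk> \<Longrightarrow>
      walsh_level (r + 2) (F i) (2 ^ ((r + 4) div 2)) \<inter> walsh_level (r + 2) (F j) (2 ^ ((r + 4) div 2)) = {}"
    and "\<exists>S. (\<forall>i\<in>{1..4}. walsh_level (r + 2) (F i) (2 ^ ((r + 2) div 2)) = S)
      \<and> (\<forall>w\<in>S. wdual (r + 2) (F 1) w \<oplus> wdual (r + 2) (F 2) w \<oplus> wdual (r + 2) (F 3) w
        \<oplus> wdual (r + 2) (F 4) w)"
proof -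
  have supp: "\<forall>p\<in>{1..3}. \<forall>i\<in>{1..4}. wsupp r (H p i) = wsupp r (H p 1)"
    and dual_sum: "\<forall>p\<in>{1..3}. \<forall>u\<in>wsupp r (H p 1).
      wdual r (H p 1) u \<oplus> wdual r (H p 2) u \<oplus> wdual r (H p 3) u \<oplus> wdual r (H p 4) u"
    using supp_dual by blast+
  show "walsh_level (r + 2) (F i) (2 ^ ((r + 4) div 2))
      \<inter> walsh_level (r + 2) (F j) (2 ^ ((r + 4) div 2)) = {}"
    if "i \<in> {1..4}" "j \<in> {1..4}" "i \<noteq> j"
    using hyp supp4_disjoint that unfolding F_def by (intro walsh_level_compose_f_top_disjoint) auto
  have "walsh_level (r + 2) (F i) (2 ^ ((r + 2) div 2))
      = walsh_level (r + 2) (F 1) (2 ^ ((r + 2) div 2))" if i: "i \<in> {1..4}" for i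
  proof -
    have "wsupp r (H p i) = wsupp r (H p 1)" if "p \<in> {1..3}" for p
      using supp that i by blast
    then show ?thesis
      unfolding F_def using hyp i by (intro walsh_level_compose_f_mid_eq) auto
  qed
  moreover have "\<forall>w\<in>walsh_level (r + 2) (F 1) (2 ^ ((r + 2) div 2)).
      wdual (r + 2) (F 1) w \<oplus> wdual (r + 2) (F 2) w \<oplus> wdual (r + 2) (F 3) w \<oplus> wdual (r + 2) (F 4) w"
    unfolding F_def using wdual_compose_f_xor[OF hyp supp dual_sum] by blast
  ultimately show "\<exists>S. (\<forall>i\<in>{1..4}. walsh_level (r + 2) (F i) (2 ^ ((r + 2) div 2)) = S)
      \<and> (\<forall>w\<in>S. wdual (r + 2) (F 1) w \<oplus> wdual (r + 2) (F 2) w \<oplus> wdual (r + 2) (F 3) w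
        \<oplus> wdual (r + 2) (F 4) w)"
    by blast
qed

theorem mainTheorem8:
  fixes r :: nat
  assumes "r \<ge> 6" and "even r"
  shows
   "(\<forall>h1 h2 h3 h4. hyp_i r h1 h2 h3 h4 \<longrightarrow>
       (\<forall>w\<in>vecs (r + 2). walsh (r + 2) (compose_f r h1 h2 h3 h4) w \<in>
          {0, 2 ^ ((r + 2) div 2), - (2 ^ ((r + 2) div 2)),
           2 ^ ((r + 4) div 2), - (2 ^ ((r + 4) div 2))}))
    \<and>
    (\<forall>H :: nat \<Rightarrow> nat \<Rightarrow> (bool list \<Rightarrow> bool).
       ((\<forall>i\<in>{1..4}. hyp_i r (H 1 i) (H 2 i) (H 3 i) (H 4 i))
        \<and> (\<forall>i\<in>{1..4}. \<forall>j\<in>{1..4}. i \<noteq> j \<longrightarrow> wsupp r (H 4 i) \<inter> wsupp r (H 4 j) = {})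
        \<and> (\<forall>p\<in>{1..3}. (\<forall>i\<in>{1..4}. wsupp r (H p i) = wsupp r (H p 1))
             \<and> (\<forall>u\<in>wsupp r (H p 1).
                 wdual r (H p 1) u \<oplus> wdual r (H p 2) u \<oplus> wdual r (H p 3) u \<oplus> wdual r (H p 4) u)))
       \<longrightarrow>
       (let n = r + 2;
            F = (\<lambda>i. compose_f r (H 1 i) (H 2 i) (H 3 i) (H 4 i));
            S1 = (\<lambda>i. {w\<in>vecs n. \<bar>walsh n (F i) w\<bar> = 2 ^ ((n + 2) div 2)});
            S2 = (\<lambda>i. {w\<in>vecs n. \<bar>walsh n (F i) w\<bar> = 2 ^ (n div 2)})
        in (\<forall>i\<in>{1..4}. \<forall>j\<in>{1..4}. i \<noteq> j \<longrightarrow> S1 i \<inter> S1 j = {})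
           \<and> (\<exists>S. (\<forall>i\<in>{1..4}. S2 i = S)
                \<and> (\<forall>w\<in>S. wdual n (F 1) w \<oplus> wdual n (F 2) w \<oplus> wdual n (F 3) w \<oplus> wdual n (F 4) w))))"
proof -
  have level_exponent: "r + 2 + 2 = r + 4"
    by simp
  show ?thesis
    unfolding Let_def level_exponent walsh_level_def[symmetric]
    apply (intro conjI allI impI ballI; (elim conjE)?)
    subgoal by (rule walsh_compose_f_values)
    subgoal by (rule walsh_levels_compose_f_family(1))
    subgoal by (rule walsh_levels_compose_f_family(2))
    done
qed

end
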